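(* Let $m\ge2$ and let $X=(X_i)_{1\le i\le n}$, $Y=(Y_i)_{1\le i\le n}$ be independent with i.i.d. letters in $\{\alpha_1,\dots,\alpha_m\}$, $\mathbb{P}(X_1=\alpha_k)=\mathbb{P}(Y_1=\alpha_k)=p_k$, where $p_2=\max_{2\le j\le m}p_j$. Let $LC_n$ be the length of the longest common subsequence of $X$ and $Y$. Let $p_1>1/2$ and let \[ D_1:=\left\{LC_n\ge np_1+\left((1-p_2)^3-p_2\right)np_2^2\right\}. \] Then \[ \mathbb{P}(D_1)\ge1-4\exp(-2np_2^6)-\exp\left(n\left(p_2^3+\log(1-p_2^3)\right)(p_1-p_2^3)\right). \]
   Context: The length of the longest common subsequence of $X_1\cdots X_n$ and $Y_1\cdots Y_n$ is the largest $k$ such that there exist $1\le i_1<\dots<i_k\le n$, $1\le j_1<\dots<j_k\le n$ with $X_{i_s}=Y_{j_s}$ for all $s$. *)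

theory Defs
  imports "HOL-Analysis.Analysis"
begin

text \<open>Letters: the alphabet {alpha_1,...,alpha_m} is represented by the indices {1..m}.
  A word of length n is a list of length n over {1..m}.\<close>

definition words :: "nat \<Rightarrow> nat \<Rightarrow> nat list set" where
  "words m n = {xs. length xs = n \<and> set xs \<subseteq> {1..m}}"

definition common_subseq_len :: "'a list \<Rightarrow> 'a list \<Rightarrow> nat \<Rightarrow> bool" where
  "common_subseq_len xs ys k \<longleftrightarrow>
     (\<exists>I J :: nat \<Rightarrow> nat. strict_mono_on {..<k} I \<and> strict_mono_on {..<k} J \<and>
        (\<forall>s<k. I s < length xs \<and> J s < length ys \<and> xs ! (I s) = ys ! (J s)))"

definition LCS_len :: "'a list \<Rightarrow> 'a list \<Rightarrow> nat" where
  "LCS_len xs ys = Max {k. common_subseq_len xs ys k}"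

definition word_prob :: "(nat \<Rightarrow> real) \<Rightarrow> nat list \<Rightarrow> real" where
  "word_prob p xs = (\<Prod>i<length xs. p (xs ! i))"

definition pair_prob :: "nat \<Rightarrow> (nat \<Rightarrow> real) \<Rightarrow> nat \<Rightarrow> (nat list \<Rightarrow> nat list \<Rightarrow> bool) \<Rightarrow> real" where
  "pair_prob m p n E =
     (\<Sum>(xs, ys) \<in> {(xs, ys). xs \<in> words m n \<and> ys \<in> words m n \<and> E xs ys}.
        word_prob p xs * word_prob p ys)"

end

theory Submission
  imports Defs "HOL-Library.Sublist" "HOL-Probability.Hoeffding"
begin

(* Cut each word at its occurrences of the letter 1 into blocks. If both words contain at least J
   ones, the first J ones together with one letter 2 for every one of the first J pairs of
   corresponding blocks that both contain a 2 form a common subsequence, so the LCS is at least J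
   plus the number of such common blocks. A block contains a 2 with probability q = p2/(p1+p2),
   independently of the other blocks and of the other word, so the number G of common blocks among
   the first J satisfies E exp(-l G) <= (1 - (1 - exp(-l)) q^2)^J, as for a Binomial(J, q^2)
   variable; this is proved by scanning the words letter by letter. For J about n(p1 - p2^3), Hoeffding's bound for the number of ones in
   each word gives the term 2 exp(-2 n p2^6), and Hoeffding's lemma for the common blocks gives
   exp(-n p2^6/2), which is below the second error term; the inequality
   q^2 (p1 - p2^3) >= p2^2 (1-p2)^3 + p2^3/2 supplies the margin. *)

definition first_block :: "'a \<Rightarrow> 'a list \<Rightarrow> 'a list" where
  "first_block s xs = takeWhile (\<lambda>x. x \<noteq> s) xs"

definition drop_block :: "'a \<Rightarrow> 'a list \<Rightarrow> 'a list" where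
  "drop_block s xs = tl (dropWhile (\<lambda>x. x \<noteq> s) xs)"

definition nth_block :: "'a \<Rightarrow> nat \<Rightarrow> 'a list \<Rightarrow> 'a list" where
  "nth_block s j xs = first_block s ((drop_block s ^^ j) xs)"

lemma first_block_simps [simp]:
  "first_block s [] = []"
  "first_block s (x # xs) = (if x = s then [] else x # first_block s xs)"
  by (simp_all add: first_block_def)

lemma drop_block_simps [simp]:
  "drop_block s [] = []"
  "drop_block s (x # xs) = (if x = s then xs else drop_block s xs)"
  by (simp_all add: drop_block_def)

lemma nth_block_0 [simp]: "nth_block s 0 xs = first_block s xs"
  by (simp add: nth_block_def)

lemma nth_block_Suc: "nth_block s (Suc j) xs = nth_block s j (drop_block s xs)"
  by (simp add: nth_block_def funpow_Suc_right del: funpow.simps)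

lemma first_block_append_drop_block:
  "s \<in> set xs \<Longrightarrow> xs = first_block s xs @ s # drop_block s xs"
  by (induction xs) auto

lemma count_list_drop_block:
  "s \<in> set xs \<Longrightarrow> count_list xs s = Suc (count_list (drop_block s xs) s)"
  by (induction xs) auto

definition common_blocks :: "'a \<Rightarrow> 'a \<Rightarrow> nat \<Rightarrow> 'a list \<Rightarrow> 'a list \<Rightarrow> nat" where
  "common_blocks s t J xs ys =
     (\<Sum>j<J. of_bool (t \<in> set (nth_block s j xs) \<and> t \<in> set (nth_block s j ys)))"

lemma common_blocks_0 [simp]: "common_blocks s t 0 xs ys = 0"
  by (simp add: common_blocks_def)

lemma common_blocks_Suc:
  "common_blocks s t (Suc J) xs ys =
     of_bool (t \<in> set (first_block s xs) \<and> t \<in> set (first_block s ys))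
     + common_blocks s t J (drop_block s xs) (drop_block s ys)"
  unfolding common_blocks_def by (simp add: sum.lessThan_Suc_shift nth_block_Suc del: sum.lessThan_Suc)

fun block_subseq :: "'a \<Rightarrow> 'a \<Rightarrow> nat \<Rightarrow> 'a list \<Rightarrow> 'a list \<Rightarrow> 'a list" where
  "block_subseq s t 0 xs ys = []"
| "block_subseq s t (Suc J) xs ys =
     (if t \<in> set (first_block s xs) \<and> t \<in> set (first_block s ys) then [t, s] else [s])
     @ block_subseq s t J (drop_block s xs) (drop_block s ys)"

lemma length_block_subseq: "length (block_subseq s t J xs ys) = J + common_blocks s t J xs ys"
  by (induction J arbitrary: xs ys) (auto simp: common_blocks_Suc)

lemma block_subseq_commute: "block_subseq s t J xs ys = block_subseq s t J ys xs"
  by (induction J arbitrary: xs ys) auto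

lemma subseq_block_subseq:
  "J \<le> count_list xs s \<Longrightarrow> subseq (block_subseq s t J xs ys) xs"
proof (induction J arbitrary: xs ys)
  case 0
  then show ?case by simp
next
  case (Suc J)
  then have s: "s \<in> set xs"
    using count_list_0_iff[of xs s] by auto
  then have "J \<le> count_list (drop_block s xs) s"
    using Suc.prems count_list_drop_block by fastforce
  then have rest: "subseq (block_subseq s t J (drop_block s xs) (drop_block s ys)) (drop_block s xs)"
    by (rule Suc.IH)
  have "subseq ([t] @ s # block_subseq s t J (drop_block s xs) (drop_block s ys))
      (first_block s xs @ s # drop_block s xs)" if "t \<in> set (first_block s xs)"
    using that rest by (intro list_emb_append_mono) (auto simp: subseq_singleton_left)
  then have "subseq (block_subseq s t (Suc J) xs ys) (first_block s xs @ s # drop_block s xs)"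
    using rest by (auto intro: list_emb_append2)
  then show ?case
    using first_block_append_drop_block[OF s] by simp
qed

lemma subseq_strict_mono_index:
  assumes "subseq zs xs"
  shows "\<exists>I. strict_mono_on {..<length zs} I \<and>
           (\<forall>k<length zs. I k < length xs \<and> xs ! I k = zs ! k)"
  using assms
proof (induction rule: list_emb.induct)
  case (list_emb_Nil ys)
  then show ?case by (auto simp: strict_mono_on_def)
next
  case (list_emb_Cons zs xs x)
  then obtain I where "strict_mono_on {..<length zs} I" "\<forall>k<length zs. I k < length xs \<and> xs ! I k = zs ! k"
    by blast
  then show ?case
    by (intro exI[of _ "\<lambda>k. Suc (I k)"]) (auto simp: strict_mono_on_def)
next
  case (list_emb_Cons2 z x zs xs)
  then obtain I where I: "strict_mono_on {..<length zs} I" "\<forall>k<length zs. I k < length xs \<and> xs ! I k = zs ! k"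
    by blast
  define I' where "I' k = (case k of 0 \<Rightarrow> 0 | Suc k \<Rightarrow> Suc (I k))" for k
  have "strict_mono_on {..<length (z # zs)} I'"
  proof (rule strict_mono_onI)
    fix k l assume "k \<in> {..<length (z # zs)}" "l \<in> {..<length (z # zs)}" "k < l"
    then show "I' k < I' l"
      using I(1) by (cases k; cases l) (auto simp: I'_def strict_mono_on_def)
  qed
  moreover have "I' k < length (x # xs) \<and> (x # xs) ! I' k = (z # zs) ! k" if "k < length (z # zs)" for k
    using that I(2) list_emb_Cons2.hyps(1) by (cases k) (auto simp: I'_def)
  ultimately show ?case
    by blast
qed

lemma common_subseq_len_le_length:
  assumes "common_subseq_len xs ys k"
  shows "k \<le> length xs"
proof -
  obtain I where "strict_mono_on {..<k} I" "\<forall>s<k. I s < length xs"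
    using assms unfolding common_subseq_len_def by blast
  then have "inj_on I {..<k}" "I ` {..<k} \<subseteq> {..<length xs}"
    by (auto intro: strict_mono_on_imp_inj_on)
  then show ?thesis
    using card_inj_on_le[of I "{..<k}" "{..<length xs}"] by simp
qed

lemma length_le_LCS_len:
  assumes "subseq zs xs" "subseq zs ys"
  shows "length zs \<le> LCS_len xs ys"
proof -
  obtain I J where "strict_mono_on {..<length zs} I" "strict_mono_on {..<length zs} J"
    "\<forall>k<length zs. I k < length xs \<and> xs ! I k = zs ! k"
    "\<forall>k<length zs. J k < length ys \<and> ys ! J k = zs ! k"
    using subseq_strict_mono_index[OF assms(1)] subseq_strict_mono_index[OF assms(2)] by blast
  then have "common_subseq_len xs ys (length zs)"
    unfolding common_subseq_len_def by (intro exI[of _ I] exI[of _ J]) auto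
  moreover have "finite {k. common_subseq_len xs ys k}"
    by (rule finite_subset[of _ "{..length xs}"]) (auto dest: common_subseq_len_le_length)
  ultimately show ?thesis
    unfolding LCS_len_def by (simp add: Max_ge)
qed

lemma common_blocks_le_LCS_len:
  assumes "J \<le> count_list xs s" "J \<le> count_list ys s"
  shows "J + common_blocks s t J xs ys \<le> LCS_len xs ys"
proof -
  have "subseq (block_subseq s t J xs ys) ys"
    using subseq_block_subseq[OF assms(2)] by (subst block_subseq_commute)
  then show ?thesis
    using length_le_LCS_len[OF subseq_block_subseq[OF assms(1)]] by (simp add: length_block_subseq)
qed

lemma LCS_len_ge_threshold:
  fixes a g :: real
  assumes "a \<le> count_list xs s" "a \<le> count_list ys s"
    and "g \<le> common_blocks s t (nat \<lceil>a\<rceil>) xs ys"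
  shows "a + g \<le> LCS_len xs ys"
proof -
  have "nat \<lceil>a\<rceil> \<le> count_list xs s" "nat \<lceil>a\<rceil> \<le> count_list ys s"
    using assms(1,2) by (simp_all add: nat_le_iff ceiling_le_iff)
  then have "nat \<lceil>a\<rceil> + common_blocks s t (nat \<lceil>a\<rceil>) xs ys \<le> LCS_len xs ys"
    by (rule common_blocks_le_LCS_len)
  moreover have "a \<le> nat \<lceil>a\<rceil>"
    by linarith
  ultimately show ?thesis
    using assms(3) by linarith
qed

(* With \<beta> j = (1 - exp (- l)) * [t occurs in the j-th block of ys], the block weight of xs is
   exp (- l * common_blocks s t J xs ys). The flag seen records that a t already occurred in the
   current block, so that the weight can be followed one letter at a time. *)
definition block_weight ::
    "'a \<Rightarrow> 'a \<Rightarrow> (nat \<Rightarrow> real) \<Rightarrow> nat \<Rightarrow> bool \<Rightarrow> 'a list \<Rightarrow> real" where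
  "block_weight s t \<beta> J seen xs =
     (if J \<le> count_list xs s
      then \<Prod>j<J. 1 - \<beta> j * of_bool (j = 0 \<and> seen \<or> t \<in> set (nth_block s j xs))
      else 0)"

lemma block_weight_0 [simp]: "block_weight s t \<beta> 0 seen xs = 1"
  by (simp add: block_weight_def)

lemma block_weight_Nil [simp]: "block_weight s t \<beta> (Suc J) seen [] = 0"
  by (simp add: block_weight_def)

lemma block_weight_Cons_sep:
  "block_weight s t \<beta> (Suc J) seen (s # xs)
     = (1 - \<beta> 0 * of_bool seen) * block_weight s t (\<lambda>j. \<beta> (Suc j)) J False xs"
  by (simp add: block_weight_def prod.lessThan_Suc_shift nth_block_Suc del: prod.lessThan_Suc)

lemma block_weight_Cons:
  assumes "x \<noteq> s"
  shows "block_weight s t \<beta> J seen (x # xs) = block_weight s t \<beta> J (seen \<or> x = t) xs"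
proof -
  have "t \<in> set (nth_block s j (x # xs)) \<longleftrightarrow> j = 0 \<and> x = t \<or> t \<in> set (nth_block s j xs)" for j
    using assms by (cases j) (auto simp: nth_block_Suc)
  then show ?thesis
    using assms unfolding block_weight_def by (auto intro!: prod.cong)
qed

lemma exp_common_blocks:
  fixes l :: real
  assumes "J \<le> count_list xs s"
  shows "exp (- l * common_blocks s t J xs ys)
    = block_weight s t (\<lambda>j. (1 - exp (- l)) * of_bool (t \<in> set (nth_block s j ys))) J False xs"
proof -
  have "exp (- l * common_blocks s t J xs ys)
      = (\<Prod>j<J. exp (- l * of_bool (t \<in> set (nth_block s j xs) \<and> t \<in> set (nth_block s j ys))))"
    by (simp only: common_blocks_def of_nat_sum of_nat_of_bool sum_distrib_left exp_sum finite_lessThan)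
  also have "\<dots> = (\<Prod>j<J. 1 - (1 - exp (- l)) * of_bool (t \<in> set (nth_block s j ys))
                                 * of_bool (t \<in> set (nth_block s j xs)))"
    by (intro prod.cong) auto
  finally show ?thesis
    using assms by (simp add: block_weight_def)
qed

lemma bernoulli_mgf_le:
  fixes r l :: real
  assumes "0 \<le> r" "r \<le> 1" "0 \<le> l"
  shows "1 - r + r * exp (- l) \<le> exp (- l * r + l\<^sup>2 / 8)"
proof -
  have pos: "0 < 1 + (1 - r) * (exp l - 1)"
    using assms by (intro add_pos_nonneg mult_nonneg_nonneg) auto
  have "ln (1 + (1 - r) * (exp l - 1)) \<le> l * (1 - r) + l\<^sup>2 / 8"
    using Hoeffdings_lemma_aux[of l "1 - r"] assms by (simp add: algebra_simps)
  then have "1 + (1 - r) * (exp l - 1) \<le> exp (l * (1 - r) + l\<^sup>2 / 8)"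
    using pos by (metis exp_le_cancel_iff exp_ln)
  then have "exp (- l) * (1 + (1 - r) * (exp l - 1)) \<le> exp (- l) * exp (l * (1 - r) + l\<^sup>2 / 8)"
    by simp
  moreover have "exp (- l) * (1 + (1 - r) * (exp l - 1)) = 1 - r + r * exp (- l)"
    by (simp add: exp_minus field_simps)
  moreover have "exp (- l) * exp (l * (1 - r) + l\<^sup>2 / 8) = exp (- l * r + l\<^sup>2 / 8)"
    by (simp add: algebra_simps flip: exp_add)
  ultimately show ?thesis
    by simp
qed

lemma ln_one_minus_ge:
  fixes x :: real
  assumes "0 \<le> x" "x < 1"
  shows "- x - x\<^sup>2 / (2 * (1 - x)) \<le> ln (1 - x)"
proof -
  define f where "f y = ln (1 - y) + y / 2 + 1 / (2 * (1 - y))" for y :: real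
  have "f 0 \<le> f x"
  proof (rule DERIV_nonneg_imp_nondecreasing[OF assms(1)])
    fix y :: real
    assume "0 \<le> y" "y \<le> x"
    then have y: "y < 1"
      using assms by simp
    have "(f has_real_derivative (1 / 2 - 1 / (1 - y) + 2 / ((2 - 2 * y) * (2 - 2 * y)))) (at y)"
      unfolding f_def using y by - (rule derivative_eq_intros refl | simp)+
    moreover have "1 / 2 - 1 / z + 2 / ((2 * z) * (2 * z)) = (1 - 1 / z)\<^sup>2 / 2" if "z \<noteq> 0" for z :: real
      using that by (simp add: field_simps power2_eq_square)
    from this[of "1 - y"] have "1 / 2 - 1 / (1 - y) + 2 / ((2 - 2 * y) * (2 - 2 * y)) = (1 - 1 / (1 - y))\<^sup>2 / 2"
      using y by (simp add: right_diff_distrib)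
    ultimately show "\<exists>d. (f has_real_derivative d) (at y) \<and> 0 \<le> d"
      by auto
  qed
  moreover have "x + x\<^sup>2 / (2 * (1 - x)) = x / 2 + 1 / (2 * (1 - x)) - 1 / 2"
    using assms by (simp add: field_simps power2_eq_square)
  ultimately show ?thesis
    by (simp add: f_def)
qed

lemma x_plus_ln_one_minus_mult_ge:
  fixes x b :: real
  assumes "0 \<le> x" "x < 1" "x \<le> b" "b \<le> 1"
  shows "- x\<^sup>2 / 2 \<le> (x + ln (1 - x)) * (b - x)"
proof -
  have "x + ln (1 - x) \<le> 0"
    using ln_one_minus_pos_upper_bound[of x] assms by simp
  then have "(x + ln (1 - x)) * (1 - x) \<le> (x + ln (1 - x)) * (b - x)"
    using assms by (intro mult_left_mono_neg) auto
  moreover have "- x\<^sup>2 / (2 * (1 - x)) * (1 - x) \<le> (x + ln (1 - x)) * (1 - x)"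
    using ln_one_minus_ge[OF assms(1,2)] assms(2) by (intro mult_right_mono) auto
  moreover have "- x\<^sup>2 / (2 * (1 - x)) * (1 - x) = - x\<^sup>2 / 2"
    using assms(2) by (simp add: field_simps)
  ultimately show ?thesis
    by linarith
qed

(* With q = a / (a + b) and x = a^3: the expected number n (b - x) q^2 of common blocks among the
   first n (b - x) exceeds the target n a^2 (1 - a)^3 by the margin n x / 2. *)
lemma block_rate_inequality:
  fixes a b :: real
  assumes "0 \<le> a" "1 / 2 < b" "a + b \<le> 1"
  shows "a\<^sup>2 * (1 - a) ^ 3 + a ^ 3 / 2 \<le> (b - a ^ 3) * (a / (a + b))\<^sup>2"
proof -
  define c where "c = (1 - a) ^ 3 + a / 2"
  have "a < 1 / 2"
    using assms by simp
  have "0 \<le> 1 - c"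
  proof -
    have "1 - c = a * ((a - 3 / 2)\<^sup>2 + 1 / 4)"
      unfolding c_def power2_eq_square power3_eq_cube by (simp add: field_simps)
    then show ?thesis
      using assms(1) by simp
  qed
  have "a ^ 3 + a * c \<le> (1 - c) / 2"
  proof -
    have "(1 - c) / 2 - (a ^ 3 + a * c) = a * ((1 / 2 - a) * (1 / 2 + 3 * a - a\<^sup>2))"
      unfolding c_def power2_eq_square power3_eq_cube by (simp add: field_simps)
    moreover have "a\<^sup>2 \<le> a"
      using \<open>a < 1 / 2\<close> assms(1) by (simp add: power2_eq_square mult_left_le)
    then have "0 \<le> a * ((1 / 2 - a) * (1 / 2 + 3 * a - a\<^sup>2))"
      using \<open>a < 1 / 2\<close> assms(1) by (intro mult_nonneg_nonneg) auto
    ultimately show ?thesis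
      by linarith
  qed
  also have "\<dots> \<le> b * (1 - c)"
    using mult_right_mono[OF less_imp_le[OF assms(2)] \<open>0 \<le> 1 - c\<close>] by simp
  finally have "c * (a + b) \<le> b - a ^ 3"
    by (simp add: algebra_simps)
  moreover have "c * (a + b)\<^sup>2 \<le> c * (a + b)"
    using assms \<open>a < 1 / 2\<close> by (intro mult_left_mono) (auto simp: c_def power2_eq_square mult_le_cancel_left1)
  ultimately have "c * (a + b)\<^sup>2 \<le> b - a ^ 3"
    by linarith
  then have "a\<^sup>2 * c * (a + b)\<^sup>2 \<le> a\<^sup>2 * (b - a ^ 3)"
    by (simp add: mult_left_mono mult.assoc)
  then have "a\<^sup>2 * c \<le> a\<^sup>2 * (b - a ^ 3) / (a + b)\<^sup>2"
    using assms by (simp add: pos_le_divide_eq)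
  then show ?thesis
    by (simp add: c_def algebra_simps power_divide power3_eq_cube power2_eq_square)
qed

locale letter_distribution =
  fixes m :: nat and p :: "nat \<Rightarrow> real"
  assumes p_nonneg: "\<And>k. k \<in> {1..m} \<Longrightarrow> 0 \<le> p k"
    and sum_p: "(\<Sum>k=1..m. p k) = 1"
begin

definition expect :: "nat \<Rightarrow> (nat list \<Rightarrow> real) \<Rightarrow> real" where
  "expect n f = (\<Sum>xs\<in>words m n. word_prob p xs * f xs)"

lemma words_0: "words m 0 = {[]}"
  by (auto simp: words_def)

lemma words_Suc: "words m (Suc n) = (\<lambda>(x, xs). x # xs) ` ({1..m} \<times> words m n)"
proof (intro set_eqI iffI)
  fix ys assume "ys \<in> words m (Suc n)"
  then show "ys \<in> (\<lambda>(x, xs). x # xs) ` ({1..m} \<times> words m n)"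
    unfolding words_def by (cases ys) force+
qed (auto simp: words_def)

lemma finite_words: "finite (words m n)"
  by (induction n) (simp_all add: words_0 words_Suc)

lemma word_prob_Cons: "word_prob p (x # xs) = p x * word_prob p xs"
  by (simp add: word_prob_def prod.lessThan_Suc_shift del: prod.lessThan_Suc)

lemma word_prob_nonneg: "xs \<in> words m n \<Longrightarrow> 0 \<le> word_prob p xs"
  unfolding word_prob_def words_def by (auto intro!: prod_nonneg p_nonneg dest: nth_mem)

lemma expect_0: "expect 0 f = f []"
  by (simp add: expect_def words_0 word_prob_def)

lemma expect_Suc: "expect (Suc n) f = (\<Sum>x=1..m. p x * expect n (\<lambda>xs. f (x # xs)))"
proof -
  have "inj_on (\<lambda>(x, xs). x # xs) ({1..m} \<times> words m n)"
    by (auto simp: inj_on_def)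
  then have "expect (Suc n) f = (\<Sum>(x, xs)\<in>{1..m} \<times> words m n. word_prob p (x # xs) * f (x # xs))"
    unfolding expect_def words_Suc by (subst sum.reindex) (simp_all add: case_prod_beta)
  then show ?thesis
    by (simp add: expect_def sum.cartesian_product word_prob_Cons sum_distrib_left mult.assoc)
qed

lemma expect_mono: "(\<And>xs. xs \<in> words m n \<Longrightarrow> f xs \<le> g xs) \<Longrightarrow> expect n f \<le> expect n g"
  unfolding expect_def by (intro sum_mono mult_left_mono) (auto intro: word_prob_nonneg)

lemma expect_const [simp]: "expect n (\<lambda>_. c) = c"
  using sum_p by (induction n) (simp_all add: expect_0 expect_Suc flip: sum_distrib_right)

lemma expect_diff: "expect n (\<lambda>xs. f xs - g xs) = expect n f - expect n g"
  unfolding expect_def by (simp add: right_diff_distrib sum_subtractf)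

lemma expect_cmult: "expect n (\<lambda>xs. c * f xs) = c * expect n f"
  unfolding expect_def by (simp add: sum_distrib_left mult.left_commute)

lemma expect_Suc_le:
  assumes "\<And>x. x \<in> {1..m} \<Longrightarrow> expect n (\<lambda>xs. f (x # xs)) \<le> g x"
  shows "expect (Suc n) f \<le> (\<Sum>x=1..m. p x * g x)"
  unfolding expect_Suc using assms by (intro sum_mono mult_left_mono) (auto intro: p_nonneg)

lemma sum_p_if:
  assumes "c \<in> {1..m}"
  shows "(\<Sum>x=1..m. p x * (if x = c then a else b)) = p c * a + (1 - p c) * b"
proof -
  have "(\<Sum>x=1..m. p x * (if x = c then a else b))
      = (\<Sum>x=1..m. p x * b + (if x = c then p x * (a - b) else 0))"
    by (intro sum.cong) (auto simp: algebra_simps)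
  also have "\<dots> = (\<Sum>x=1..m. p x) * b + p c * (a - b)"
    using assms by (simp add: sum.distrib sum_distrib_right)
  finally show ?thesis
    using sum_p by (simp add: algebra_simps)
qed

lemma sum_p_if2:
  assumes "s \<in> {1..m}" "t \<in> {1..m}" "s \<noteq> t"
  shows "(\<Sum>x=1..m. p x * (if x = s then a else if x = t then b else c))
      = p s * a + p t * b + (1 - p s - p t) * c"
proof -
  have "(\<Sum>x=1..m. p x * (if x = s then a else if x = t then b else c))
      = (\<Sum>x=1..m. p x * c + (if x = s then p x * (a - c) else 0) + (if x = t then p x * (b - c) else 0))"
    using assms(3) by (intro sum.cong) (auto simp: algebra_simps)
  also have "\<dots> = (\<Sum>x=1..m. p x) * c + p s * (a - c) + p t * (b - c)"
    using assms by (simp add: sum.distrib sum_distrib_right)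
  finally show ?thesis
    using sum_p by (simp add: algebra_simps)
qed

lemma pair_prob_eq_expect:
  "pair_prob m p n P = expect n (\<lambda>ys. expect n (\<lambda>xs. of_bool (P xs ys)))"
proof -
  have "pair_prob m p n P
      = (\<Sum>(xs, ys)\<in>words m n \<times> words m n. word_prob p xs * word_prob p ys * of_bool (P xs ys))"
    unfolding pair_prob_def
    by (rule sum.mono_neutral_cong_left) (auto simp: finite_words)
  also have "\<dots> = (\<Sum>ys\<in>words m n. \<Sum>xs\<in>words m n. word_prob p xs * word_prob p ys * of_bool (P xs ys))"
    by (subst sum.cartesian_product[symmetric]) (rule sum.swap)
  finally show ?thesis
    by (simp add: expect_def sum_distrib_left algebra_simps)
qed

lemma p_le_1: "k \<in> {1..m} \<Longrightarrow> p k \<le> 1"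
  using member_le_sum[of k "{1..m}" p] p_nonneg sum_p by auto

lemma p_add_le_1:
  assumes "s \<in> {1..m}" "t \<in> {1..m}" "s \<noteq> t"
  shows "p s + p t \<le> 1"
proof -
  have "sum p {s, t} \<le> sum p {1..m}"
    using assms p_nonneg by (intro sum_mono2) auto
  then show ?thesis
    using assms(3) sum_p by simp
qed

lemma pair_prob_ge_union_bound:
  assumes "\<And>xs ys. \<not> A xs \<Longrightarrow> \<not> A ys \<Longrightarrow> \<not> B xs ys \<Longrightarrow> P xs ys"
  shows "1 - 2 * expect n (\<lambda>xs. of_bool (A xs)) - pair_prob m p n B \<le> pair_prob m p n P"
proof -
  have "1 - of_bool (A ys) - of_bool (A xs) - of_bool (B xs ys) \<le> (of_bool (P xs ys) :: real)" for xs ys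
    using assms[of xs ys] by auto
  then have "expect n (\<lambda>ys. expect n (\<lambda>xs. 1 - of_bool (A ys) - of_bool (A xs) - of_bool (B xs ys)))
      \<le> pair_prob m p n P"
    unfolding pair_prob_eq_expect by (intro expect_mono)
  then show ?thesis
    by (simp add: expect_diff pair_prob_eq_expect)
qed

lemma expect_exp_count_list:
  fixes l :: real
  assumes "c \<in> {1..m}"
  shows "expect n (\<lambda>xs. exp (- l * count_list xs c)) = (1 - p c + p c * exp (- l)) ^ n"
proof (induction n)
  case 0
  then show ?case by (simp add: expect_0)
next
  case (Suc n)
  have "exp (- l * count_list (x # xs) c) = (if x = c then exp (- l) else 1) * exp (- l * count_list xs c)"
    for x xs
    by (simp add: algebra_simps flip: exp_add)
  then have step: "expect n (\<lambda>xs. exp (- l * count_list (x # xs) c))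
      = (if x = c then exp (- l) * (1 - p c + p c * exp (- l)) ^ n else (1 - p c + p c * exp (- l)) ^ n)"
    for x
    by (simp only: expect_cmult Suc.IH) simp
  show ?case
    by (simp only: expect_Suc step sum_p_if[OF assms]) (simp add: algebra_simps)
qed

lemma count_list_lower_tail:
  assumes "c \<in> {1..m}" "0 \<le> t"
  shows "expect n (\<lambda>xs. of_bool (real (count_list xs c) < n * (p c - t))) \<le> exp (- 2 * real n * t\<^sup>2)"
proof -
  define l where "l = 4 * t"
  have l: "0 \<le> l"
    using assms by (simp add: l_def)
  have "expect n (\<lambda>xs. of_bool (real (count_list xs c) < n * (p c - t)))
      \<le> expect n (\<lambda>xs. exp (l * n * (p c - t)) * exp (- l * count_list xs c))"
  proof (rule expect_mono)
    fix xs
    have "of_bool (real (count_list xs c) < n * (p c - t)) \<le> exp (l * (n * (p c - t) - count_list xs c))"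
      using l by (auto intro: one_le_exp_iff[THEN iffD2])
    then show "of_bool (real (count_list xs c) < n * (p c - t))
        \<le> exp (l * n * (p c - t)) * exp (- l * count_list xs c)"
      by (simp add: algebra_simps flip: exp_add)
  qed
  also have "\<dots> = exp (l * n * (p c - t)) * (1 - p c + p c * exp (- l)) ^ n"
    by (simp only: expect_cmult expect_exp_count_list[OF assms(1)])
  also have "\<dots> \<le> exp (l * n * (p c - t)) * exp (- l * p c + l\<^sup>2 / 8) ^ n"
    using assms l p_nonneg p_le_1
    by (intro mult_left_mono power_mono bernoulli_mgf_le) (auto simp: mult_le_one)
  also have "\<dots> = exp (- 2 * real n * t\<^sup>2)"
    by (simp add: l_def power2_eq_square algebra_simps flip: exp_add exp_of_nat_mult)
  finally show ?thesis .
qed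

(* The probability that a t occurs before the next s, i.e. that a given block contains t. *)
definition before_prob :: "nat \<Rightarrow> nat \<Rightarrow> real" where
  "before_prob s t = p t / (p s + p t)"

lemma before_prob_nonneg: "s \<in> {1..m} \<Longrightarrow> t \<in> {1..m} \<Longrightarrow> 0 \<le> before_prob s t"
  by (simp add: before_prob_def p_nonneg)

lemma before_prob_le_1: "s \<in> {1..m} \<Longrightarrow> t \<in> {1..m} \<Longrightarrow> before_prob s t \<le> 1"
  using p_nonneg[of s] p_nonneg[of t] by (auto simp: before_prob_def divide_le_eq_1)

lemma p_eq_before_prob: "s \<in> {1..m} \<Longrightarrow> t \<in> {1..m} \<Longrightarrow> p t = before_prob s t * (p s + p t)"
  using p_nonneg[of s] p_nonneg[of t] by (cases "p s + p t = 0") (simp_all add: before_prob_def)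

lemma expect_block_weight_le:
  assumes s: "s \<in> {1..m}" and t: "t \<in> {1..m}" and "s \<noteq> t"
    and \<beta>: "\<And>j. 0 \<le> \<beta> j \<and> \<beta> j \<le> 1"
  shows "expect n (block_weight s t \<beta> J seen)
      \<le> (\<Prod>j<J. 1 - \<beta> j * (if j = 0 \<and> seen then 1 else before_prob s t))"
  using \<beta>
proof (induction n arbitrary: \<beta> J seen)
  case 0
  have "0 \<le> (\<Prod>j<J. 1 - \<beta> j * (if j = 0 \<and> seen then 1 else before_prob s t))"
    using 0 before_prob_nonneg[OF s t] before_prob_le_1[OF s t] by (intro prod_nonneg) (simp add: mult_le_one)
  then show ?case
    by (cases J) (simp_all add: expect_0)
next
  case (Suc n)
  show ?case
  proof (cases J)
    case 0
    then show ?thesis by simp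
  next
    case (Suc J')
    let ?q = "before_prob s t"
    define R where "R = (\<Prod>j<J'. 1 - \<beta> (Suc j) * ?q)"
    have bound: "(\<Prod>j<J. 1 - \<beta> j * (if j = 0 \<and> seen' then 1 else ?q))
        = (1 - \<beta> 0 * (if seen' then 1 else ?q)) * R"
      for seen'
      by (simp add: Suc R_def prod.lessThan_Suc_shift del: prod.lessThan_Suc)
    have IH_head: "expect n (block_weight s t \<beta> J seen') \<le> (1 - \<beta> 0 * (if seen' then 1 else ?q)) * R"
      for seen'
      using Suc.IH[of \<beta> J seen', OF Suc.prems] by (simp only: bound)
    have IH_tail: "expect n (block_weight s t (\<lambda>j. \<beta> (Suc j)) J' False) \<le> R"
      using Suc.IH[of "\<lambda>j. \<beta> (Suc j)" J' False] Suc.prems by (simp add: R_def)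
    have "expect n (\<lambda>xs. block_weight s t \<beta> J seen (x # xs))
        \<le> (if x = s then (1 - \<beta> 0 * of_bool seen) * R
           else if x = t then (1 - \<beta> 0) * R else (1 - \<beta> 0 * (if seen then 1 else ?q)) * R)" for x
      using IH_head[of True] IH_head[of seen] Suc.prems IH_tail \<open>s \<noteq> t\<close>
      by (auto simp: Suc block_weight_Cons_sep block_weight_Cons expect_cmult bound intro: mult_left_mono)
    then have "expect (Suc n) (block_weight s t \<beta> J seen)
        \<le> p s * ((1 - \<beta> 0 * of_bool seen) * R) + p t * ((1 - \<beta> 0) * R)
          + (1 - p s - p t) * ((1 - \<beta> 0 * (if seen then 1 else ?q)) * R)"
      by (subst sum_p_if2[OF s t \<open>s \<noteq> t\<close>, symmetric]) (rule expect_Suc_le)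
    also have "\<dots> = (1 - \<beta> 0 * (if seen then 1 else ?q)) * R"
      using p_eq_before_prob[OF s t] by (cases seen) (simp_all add: algebra_simps)
    finally show ?thesis
      by (simp only: bound)
  qed
qed

lemma pair_prob_few_common_blocks_le_mgf:
  fixes l g :: real
  assumes s: "s \<in> {1..m}" and t: "t \<in> {1..m}" and "s \<noteq> t" and "0 \<le> l"
  shows "pair_prob m p n (\<lambda>xs ys. J \<le> count_list xs s \<and> J \<le> count_list ys s
                                   \<and> real (common_blocks s t J xs ys) < g)
      \<le> exp (l * g) * (1 - (1 - exp (- l)) * (before_prob s t)\<^sup>2) ^ J"
proof -
  let ?q = "before_prob s t"
  define c where "c = 1 - exp (- l)"
  have c: "0 \<le> c" "c \<le> 1"
    using \<open>0 \<le> l\<close> by (auto simp: c_def)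
  have q: "0 \<le> ?q" "?q \<le> 1"
    using before_prob_nonneg[OF s t] before_prob_le_1[OF s t] .
  define \<beta> where "\<beta> ys = (\<lambda>j. c * of_bool (t \<in> set (nth_block s j ys)))" for ys
  have inner: "expect n (\<lambda>xs. of_bool (J \<le> count_list xs s \<and> J \<le> count_list ys s
                                         \<and> real (common_blocks s t J xs ys) < g))
      \<le> exp (l * g) * block_weight s t (\<lambda>_. c * ?q) J False ys" for ys
  proof (cases "J \<le> count_list ys s")
    case False
    then show ?thesis
      by (simp add: block_weight_def)
  next
    case True
    have "expect n (\<lambda>xs. of_bool (J \<le> count_list xs s \<and> J \<le> count_list ys s
                                    \<and> real (common_blocks s t J xs ys) < g))
        \<le> expect n (\<lambda>xs. exp (l * g) * block_weight s t (\<beta> ys) J False xs)"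
    proof (rule expect_mono)
      fix xs
      show "of_bool (J \<le> count_list xs s \<and> J \<le> count_list ys s \<and> real (common_blocks s t J xs ys) < g)
          \<le> exp (l * g) * block_weight s t (\<beta> ys) J False xs"
      proof (cases "J \<le> count_list xs s")
        case True
        have "of_bool (real (common_blocks s t J xs ys) < g) \<le> exp (l * (g - common_blocks s t J xs ys))"
          using \<open>0 \<le> l\<close> by (auto intro: one_le_exp_iff[THEN iffD2])
        also have "\<dots> = exp (l * g) * exp (- l * common_blocks s t J xs ys)"
          by (simp add: algebra_simps flip: exp_add)
        also have "\<dots> = exp (l * g) * block_weight s t (\<beta> ys) J False xs"
          using exp_common_blocks[OF True] by (simp add: \<beta>_def c_def)
        finally show ?thesis
          by (cases "real (common_blocks s t J xs ys) < g") simp_all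
      qed (simp add: block_weight_def)
    qed
    also have "\<dots> \<le> exp (l * g) * (\<Prod>j<J. 1 - \<beta> ys j * ?q)"
      using expect_block_weight_le[OF s t \<open>s \<noteq> t\<close>, of "\<beta> ys" n J False] c
      by (simp add: expect_cmult \<beta>_def)
    also have "\<dots> = exp (l * g) * block_weight s t (\<lambda>_. c * ?q) J False ys"
      using True by (simp add: block_weight_def \<beta>_def mult_ac)
    finally show ?thesis .
  qed
  have "pair_prob m p n (\<lambda>xs ys. J \<le> count_list xs s \<and> J \<le> count_list ys s
                                   \<and> real (common_blocks s t J xs ys) < g)
      \<le> expect n (\<lambda>ys. exp (l * g) * block_weight s t (\<lambda>_. c * ?q) J False ys)"
    unfolding pair_prob_eq_expect by (intro expect_mono inner)
  also have "\<dots> \<le> exp (l * g) * (\<Prod>j<J. 1 - c * ?q * ?q)"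
    using expect_block_weight_le[OF s t \<open>s \<noteq> t\<close>, of "\<lambda>_. c * ?q" n J False] c q
    by (simp add: expect_cmult mult_le_one)
  also have "\<dots> = exp (l * g) * (1 - (1 - exp (- l)) * ?q\<^sup>2) ^ J"
    by (simp add: c_def power2_eq_square mult.assoc)
  finally show ?thesis .
qed

lemma pair_prob_few_common_blocks_le:
  assumes s: "s \<in> {1..m}" and t: "t \<in> {1..m}" and "s \<noteq> t" and "1 / 2 < p s"
    and J: "n * (p s - p t ^ 3) \<le> J" "J \<le> n"
  shows "pair_prob m p n (\<lambda>xs ys. J \<le> count_list xs s \<and> J \<le> count_list ys s
            \<and> real (common_blocks s t J xs ys) < n * (p t)\<^sup>2 * (1 - p t) ^ 3)
      \<le> exp (n * (p t ^ 3 + ln (1 - p t ^ 3)) * (p s - p t ^ 3))"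
proof -
  let ?q = "before_prob s t"
  define x where "x = p t ^ 3"
  define g where "g = n * (p t)\<^sup>2 * (1 - p t) ^ 3"
  define l where "l = 2 * x"
  have "p s + p t \<le> 1" "0 \<le> p t"
    using p_add_le_1[OF s t \<open>s \<noteq> t\<close>] p_nonneg[OF t] .
  then have "x \<le> p t"
    using power_decreasing[of 1 3 "p t"] \<open>1 / 2 < p s\<close> by (simp add: x_def)
  then have x: "0 \<le> x" "x < 1" "x \<le> p s" "p s \<le> 1"
    using \<open>0 \<le> p t\<close> \<open>1 / 2 < p s\<close> \<open>p s + p t \<le> 1\<close> by (auto simp: x_def)
  have q: "0 \<le> ?q\<^sup>2" "?q\<^sup>2 \<le> 1"
    using before_prob_nonneg[OF s t] before_prob_le_1[OF s t] by (auto simp: power_le_one)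
  have "n * ((p t)\<^sup>2 * (1 - p t) ^ 3 + x / 2) \<le> n * ((p s - x) * ?q\<^sup>2)"
    using block_rate_inequality[of "p t" "p s"] \<open>0 \<le> p t\<close> \<open>1 / 2 < p s\<close> \<open>p s + p t \<le> 1\<close>
    by (intro mult_left_mono) (simp_all add: x_def before_prob_def add.commute)
  then have "g + n * x / 2 \<le> n * (p s - x) * ?q\<^sup>2"
    by (simp add: g_def algebra_simps)
  also have "\<dots> \<le> J * ?q\<^sup>2"
    using J q unfolding x_def by (intro mult_right_mono) auto
  finally have rate: "g + n * x / 2 \<le> J * ?q\<^sup>2" .
  have "pair_prob m p n (\<lambda>xs ys. J \<le> count_list xs s \<and> J \<le> count_list ys s
            \<and> real (common_blocks s t J xs ys) < g)
      \<le> exp (l * g) * (1 - (1 - exp (- l)) * ?q\<^sup>2) ^ J"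
    using x by (intro pair_prob_few_common_blocks_le_mgf[OF s t \<open>s \<noteq> t\<close>]) (simp add: l_def)
  also have "\<dots> \<le> exp (l * g) * exp (- l * ?q\<^sup>2 + l\<^sup>2 / 8) ^ J"
  proof -
    have "(1 - exp (- l)) * ?q\<^sup>2 \<le> 1"
      using x q by (intro mult_le_one) (auto simp: l_def)
    then show ?thesis
      using bernoulli_mgf_le[of "?q\<^sup>2" l] x q
      by (intro mult_left_mono power_mono) (auto simp: l_def algebra_simps)
  qed
  also have "\<dots> = exp (l * g - l * (J * ?q\<^sup>2) + J * l\<^sup>2 / 8)"
    by (simp add: algebra_simps flip: exp_add exp_of_nat_mult)
  also have "\<dots> \<le> exp (- (n * x\<^sup>2 / 2))"
  proof -
    have "l * (g + n * x / 2) \<le> l * (J * ?q\<^sup>2)" "J * l\<^sup>2 \<le> n * l\<^sup>2"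
      using rate x J by (auto simp: l_def intro: mult_left_mono mult_right_mono)
    then show ?thesis
      by (simp add: l_def power2_eq_square algebra_simps)
  qed
  also have "\<dots> \<le> exp (n * (x + ln (1 - x)) * (p s - x))"
    using mult_left_mono[OF x_plus_ln_one_minus_mult_ge[OF x], of "real n"] by (simp add: mult.assoc)
  finally show ?thesis
    by (simp add: g_def x_def)
qed

lemma LCS_len_lower_tail:
  assumes s: "s \<in> {1..m}" and t: "t \<in> {1..m}" and "s \<noteq> t" and "1 / 2 < p s"
  shows "1 - 2 * exp (- 2 * real n * p t ^ 6)
           - exp (n * (p t ^ 3 + ln (1 - p t ^ 3)) * (p s - p t ^ 3))
      \<le> pair_prob m p n (\<lambda>xs ys. n * p s + ((1 - p t) ^ 3 - p t) * n * (p t)\<^sup>2 \<le> LCS_len xs ys)"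
proof -
  define a where "a = n * (p s - p t ^ 3)"
  define g where "g = n * (p t)\<^sup>2 * (1 - p t) ^ 3"
  define J where "J = nat \<lceil>a\<rceil>"
  have "0 \<le> p t ^ 3" "p t ^ 3 \<le> p t" "p s + p t \<le> 1"
    using power_decreasing[of 1 3 "p t"] p_nonneg[OF t] p_le_1[OF t] p_add_le_1[OF s t \<open>s \<noteq> t\<close>]
    by auto
  then have "0 \<le> p s - p t ^ 3" "p s - p t ^ 3 \<le> 1"
    using \<open>1 / 2 < p s\<close> by linarith+
  then have "0 \<le> a" "a \<le> n"
    unfolding a_def by (simp_all add: mult_left_le)
  then have "a \<le> J" "J \<le> n"
    unfolding J_def by (auto simp: nat_le_iff ceiling_le_iff)
  have "1 - 2 * expect n (\<lambda>xs. of_bool (real (count_list xs s) < a))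
      - pair_prob m p n (\<lambda>xs ys. J \<le> count_list xs s \<and> J \<le> count_list ys s
                                     \<and> real (common_blocks s t J xs ys) < g)
      \<le> pair_prob m p n (\<lambda>xs ys. a + g \<le> LCS_len xs ys)"
  proof (rule pair_prob_ge_union_bound)
    fix xs ys :: "nat list"
    assume "\<not> real (count_list xs s) < a" "\<not> real (count_list ys s) < a"
      and "\<not> (J \<le> count_list xs s \<and> J \<le> count_list ys s \<and> real (common_blocks s t J xs ys) < g)"
    then show "a + g \<le> LCS_len xs ys"
      unfolding J_def
      by (intro LCS_len_ge_threshold[where s = s and t = t]) (auto simp: nat_le_iff ceiling_le_iff)
  qed
  moreover have "expect n (\<lambda>xs. of_bool (real (count_list xs s) < a)) \<le> exp (- 2 * real n * p t ^ 6)"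
    using count_list_lower_tail[OF s, of "p t ^ 3" n] p_nonneg[OF t]
    by (simp add: a_def flip: power_mult)
  moreover have "pair_prob m p n (\<lambda>xs ys. J \<le> count_list xs s \<and> J \<le> count_list ys s
                                     \<and> real (common_blocks s t J xs ys) < g)
      \<le> exp (n * (p t ^ 3 + ln (1 - p t ^ 3)) * (p s - p t ^ 3))"
    unfolding g_def
    using pair_prob_few_common_blocks_le[OF s t \<open>s \<noteq> t\<close> \<open>1 / 2 < p s\<close>] \<open>a \<le> J\<close> \<open>J \<le> n\<close>
    by (simp add: a_def)
  moreover have "n * p s + ((1 - p t) ^ 3 - p t) * n * (p t)\<^sup>2 = a + g"
    by (simp add: a_def g_def algebra_simps power2_eq_square power3_eq_cube)
  ultimately show ?thesis
    by simp
qed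

end

theorem lemma3p1:
  fixes m n :: nat and p :: "nat \<Rightarrow> real"
  assumes "m \<ge> 2"
    and "\<forall>k\<in>{1..m}. p k \<ge> 0"
    and "(\<Sum>k=1..m. p k) = 1"
    and "\<forall>j\<in>{2..m}. p j \<le> p 2"
    and "p 1 > 1/2"
  shows "pair_prob m p n (\<lambda>xs ys. real (LCS_len xs ys)
            \<ge> n * p 1 + ((1 - p 2)^3 - p 2) * n * (p 2)^2)
         \<ge> 1 - 4 * exp (- 2 * n * (p 2)^6)
             - exp (n * ((p 2)^3 + ln (1 - (p 2)^3)) * (p 1 - (p 2)^3))"
proof -
  interpret letter_distribution m p
    using assms(2,3) by unfold_locales auto
  have "1 - 2 * exp (- 2 * real n * p 2 ^ 6) - exp (n * (p 2 ^ 3 + ln (1 - p 2 ^ 3)) * (p 1 - p 2 ^ 3))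
      \<le> pair_prob m p n (\<lambda>xs ys. n * p 1 + ((1 - p 2) ^ 3 - p 2) * n * (p 2)\<^sup>2 \<le> LCS_len xs ys)"
    using assms(1,5) by (intro LCS_len_lower_tail) auto
  moreover have "exp (- 2 * n * (p 2)^6) = exp (- 2 * real n * (p 2)^6)"
    by simp
  ultimately show ?thesis
    using exp_ge_zero[of "- 2 * real n * (p 2)^6"] by linarith
qed

end
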